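(* Let $d\ge1$ and $C\subset\mathbb R^d$ an adapted cone. Suppose there exist constants $\gamma>0$ and $\alpha>0$ such that $\mathbb P(T_C>n)\ge\gamma n^{-\alpha}$ for all $n\ge1$, and that $\mathbb E(\Vert\xi_1\Vert^{2\alpha+2})<\infty$. Then $\mathbb P\big(\max_{1\le i\le n}\Vert\xi_i\Vert>\sqrt n\,\big|\,T_C>n\big)\to0$ as $n\to\infty$.
   Context: $(\xi_n)_{n\ge1}$ i.i.d. random vectors in $\mathbb R^d$ with mean zero and covariance $\sigma^2I_d$, $\sigma^2>0$; $S_n=\xi_1+\cdots+\xi_n$. A linear cone $C$ ($\lambda C=C$ for all $\lambda>0$) is adapted if convex, with non-empty interior, and $\mathbb P(\xi_1\in C\setminus\{0\})>0$. $T_C=\inf\{n\ge1:S_n\notin C\}$. *)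

theory Defs
  imports "HOL-Probability.Probability"
begin

definition linear_cone :: "'v::real_vector set \<Rightarrow> bool" where
  "linear_cone C \<longleftrightarrow> (\<forall>c::real. c > 0 \<longrightarrow> (\<lambda>x. c *\<^sub>R x) ` C = C)"

definition adapted_cone :: "'a measure \<Rightarrow> ('a \<Rightarrow> 'v::euclidean_space) \<Rightarrow> 'v set \<Rightarrow> bool" where
  "adapted_cone M X C \<longleftrightarrow> linear_cone C \<and> convex C \<and> interior C \<noteq> {} \<and>
     \<P>(\<omega> in M. X \<omega> \<in> C - {0}) > 0"

text \<open>Partial sums S_n = xi_1 + ... + xi_n (steps indexed from 1).\<close>
definition partial_sum :: "(nat \<Rightarrow> 'a \<Rightarrow> 'v::real_vector) \<Rightarrow> nat \<Rightarrow> 'a \<Rightarrow> 'v" where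
  "partial_sum \<xi> n \<omega> = (\<Sum>i=1..n. \<xi> i \<omega>)"

definition exit_time :: "(nat \<Rightarrow> 'a \<Rightarrow> 'v::real_vector) \<Rightarrow> 'v set \<Rightarrow> 'a \<Rightarrow> enat" where
  "exit_time \<xi> C \<omega> =
     (if \<exists>n\<ge>1. partial_sum \<xi> n \<omega> \<notin> C
      then enat (LEAST n. n \<ge> 1 \<and> partial_sum \<xi> n \<omega> \<notin> C) else \<infinity>)"

end

theory Submission
  imports Defs
begin

(* Put s = sqrt n and Y = norm xi_1.  The event
   {max_{i<=n} norm xi_i > s} is contained in the union of the events
   {norm xi_i > s}, which all have the law of {Y > s}; hence its probability is
   at most n * P(Y > s).  Dividing by P(T_C > n) >= gamma * n^(-alpha) gives
     P(max > s | T_C > n) <= n^(alpha+1) * P(Y > s) / gamma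
                          <= E[Y^(2 alpha + 2); Y > sqrt n] / gamma,
   by Markov's inequality restricted to {Y > s}, since s^(2 alpha+2) = n^(alpha+1).
   The last expectation tends to 0 by dominated convergence, because Y^(2 alpha+2)
   is integrable. *)

lemma tail_integral_tendsto_zero:
  fixes h g :: "'a \<Rightarrow> real" and c :: "nat \<Rightarrow> real"
  assumes h[measurable]: "h \<in> borel_measurable M" and g: "integrable M g"
    and c: "filterlim c at_top sequentially"
  shows "(\<lambda>n. \<integral>\<omega>. indicator {\<omega>\<in>space M. c n < h \<omega>} \<omega> * g \<omega> \<partial>M) \<longlonglongrightarrow> 0"
proof -
  have "(\<lambda>n. \<integral>\<omega>. indicator {\<omega>\<in>space M. c n < h \<omega>} \<omega> * g \<omega> \<partial>M)
          \<longlonglongrightarrow> (\<integral>\<omega>. 0 \<partial>M)"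
  proof (rule integral_dominated_convergence[where w="\<lambda>\<omega>. norm (g \<omega>)"])
    show "AE \<omega> in M. (\<lambda>n. indicator {\<omega>\<in>space M. c n < h \<omega>} \<omega> * g \<omega>) \<longlonglongrightarrow> 0"
    proof (rule AE_I2)
      fix \<omega>
      have "eventually (\<lambda>n. h \<omega> \<le> c n) sequentially"
        using c by (simp add: filterlim_at_top)
      then have "eventually (\<lambda>n. indicator {\<omega>\<in>space M. c n < h \<omega>} \<omega> * g \<omega> = 0) sequentially"
        by eventually_elim (simp add: indicator_def)
      then show "(\<lambda>n. indicator {\<omega>\<in>space M. c n < h \<omega>} \<omega> * g \<omega>) \<longlonglongrightarrow> 0"
        by (rule tendsto_eventually)
    qed
  qed (use g in \<open>auto simp: indicator_def\<close>)
  then show ?thesis by simp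
qed

lemma (in finite_measure) tail_measure_le_tail_moment:
  fixes Y :: "'a \<Rightarrow> real"
  assumes [measurable]: "Y \<in> borel_measurable M"
    and Yp: "integrable M (\<lambda>\<omega>. Y \<omega> powr p)" and "0 \<le> t" and "0 \<le> p"
  shows "t powr p * measure M {\<omega>\<in>space M. t < Y \<omega>}
           \<le> (\<integral>\<omega>. indicator {\<omega>\<in>space M. t < Y \<omega>} \<omega> * Y \<omega> powr p \<partial>M)"
proof -
  let ?E = "{\<omega>\<in>space M. t < Y \<omega>}"
  have E[measurable]: "?E \<in> sets M" by measurable
  have "t powr p * measure M ?E = (\<integral>\<omega>. indicator ?E \<omega> * t powr p \<partial>M)"
    by (simp add: mult.commute)
  also have "\<dots> \<le> (\<integral>\<omega>. indicator ?E \<omega> * Y \<omega> powr p \<partial>M)"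
  proof (rule integral_mono)
    show "integrable M (\<lambda>\<omega>. indicator ?E \<omega> * t powr p)"
      by (simp add: emeasure_eq_measure)
    show "integrable M (\<lambda>\<omega>. indicator ?E \<omega> * Y \<omega> powr p)"
      using integrable_mult_indicator[OF E Yp] by simp
    show "indicator ?E \<omega> * t powr p \<le> indicator ?E \<omega> * Y \<omega> powr p" for \<omega>
      using assms(3,4) by (auto simp: indicator_def intro!: powr_mono2)
  qed
  finally show ?thesis .
qed

lemma (in finite_measure) max_norm_exceeds_le:
  fixes \<xi> :: "nat \<Rightarrow> 'a \<Rightarrow> 'v::euclidean_space"
  assumes meas[measurable]: "\<And>i. \<xi> i \<in> borel_measurable M"
    and ident: "\<And>i. i \<ge> 1 \<Longrightarrow> distr M borel (\<xi> i) = distr M borel (\<xi> 1)"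
    and "n \<ge> 1"
  shows "measure M {\<omega>\<in>space M. s < Max ((\<lambda>i. norm (\<xi> i \<omega>)) ` {1..n})}
           \<le> real n * measure M {\<omega>\<in>space M. s < norm (\<xi> 1 \<omega>)}"
proof -
  have B[measurable]: "{x::'v. s < norm x} \<in> sets borel" by measurable
  have same_law: "measure M {\<omega>\<in>space M. s < norm (\<xi> i \<omega>)}
                    = measure M {\<omega>\<in>space M. s < norm (\<xi> 1 \<omega>)}" if "i \<ge> 1" for i
  proof -
    have "measure M {\<omega>\<in>space M. s < norm (\<xi> j \<omega>)} = measure (distr M borel (\<xi> j)) {x. s < norm x}"
      for j by (subst measure_distr[OF meas B]) (auto intro!: arg_cong[where f="measure M"])
    then show ?thesis using ident[OF that] by metis
  qed
  have "measure M {\<omega>\<in>space M. s < Max ((\<lambda>i. norm (\<xi> i \<omega>)) ` {1..n})}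
          \<le> measure M (\<Union>i\<in>{1..n}. {\<omega>\<in>space M. s < norm (\<xi> i \<omega>)})"
    using \<open>n \<ge> 1\<close> by (intro finite_measure_mono) (auto simp: Max_gr_iff)
  also have "\<dots> \<le> (\<Sum>i\<in>{1..n}. measure M {\<omega>\<in>space M. s < norm (\<xi> i \<omega>)})"
    by (rule measure_UNION_le) auto
  also have "\<dots> = (\<Sum>i\<in>{1..n}. measure M {\<omega>\<in>space M. s < norm (\<xi> 1 \<omega>)})"
    by (intro sum.cong refl same_law) simp
  also have "\<dots> = real n * measure M {\<omega>\<in>space M. s < norm (\<xi> 1 \<omega>)}"
    by simp
  finally show ?thesis .
qed

lemma ratio_le_under_polynomial_lower_bound:
  fixes N D q \<gamma> \<alpha> :: real
  assumes "0 \<le> N" "N \<le> real n * q" "\<gamma> * real n powr (-\<alpha>) \<le> D" "0 < \<gamma>" "n \<ge> 1"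
  shows "N / D \<le> real n powr (\<alpha> + 1) * q / \<gamma>"
proof -
  have npos: "real n > 0" using \<open>n \<ge> 1\<close> by simp
  have lower_pos: "\<gamma> * real n powr (-\<alpha>) > 0" using \<open>0 < \<gamma>\<close> npos by simp
  then have "D > 0" using assms(3) by linarith
  have "N / D \<le> N / (\<gamma> * real n powr (-\<alpha>))"
    using assms lower_pos \<open>D > 0\<close> by (intro divide_left_mono) auto
  also have "\<dots> = N * real n powr \<alpha> / \<gamma>"
    using npos by (simp add: powr_minus field_simps)
  also have "\<dots> \<le> real n * q * real n powr \<alpha> / \<gamma>"
    using assms by (intro divide_right_mono mult_right_mono) auto
  also have "\<dots> = real n powr (\<alpha> + 1) * q / \<gamma>"
    using npos by (simp add: powr_add)
  finally show ?thesis .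
qed

lemma sqrt_powr_moment_order: "sqrt (real n) powr (2 * \<alpha> + 2) = real n powr (\<alpha> + 1)"
proof -
  have "sqrt (real n) powr (2 * \<alpha> + 2) = real n powr ((1/2) * (2 * \<alpha> + 2))"
    by (simp add: powr_half_sqrt[symmetric] powr_powr)
  then show ?thesis by (simp add: algebra_simps)
qed

theorem mainTheorem9:
  fixes M :: "'a measure" and \<xi> :: "nat \<Rightarrow> 'a \<Rightarrow> 'v::euclidean_space"
    and C :: "'v set" and \<sigma>2 \<gamma> \<alpha> :: real
  assumes "prob_space M"
    and meas: "\<And>i. \<xi> i \<in> borel_measurable M"
    and indep: "prob_space.indep_vars M (\<lambda>_. borel) \<xi> {1..}"
    and ident: "\<And>i. i \<ge> 1 \<Longrightarrow> distr M borel (\<xi> i) = distr M borel (\<xi> 1)"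
    and int1: "integrable M (\<xi> 1)"
    and mean0: "(\<integral>\<omega>. \<xi> 1 \<omega> \<partial>M) = 0"
    and int2: "\<And>u. integrable M (\<lambda>\<omega>. (\<xi> 1 \<omega> \<bullet> u)\<^sup>2)"
    and cov: "\<And>u v. (\<integral>\<omega>. (\<xi> 1 \<omega> \<bullet> u) * (\<xi> 1 \<omega> \<bullet> v) \<partial>M) = \<sigma>2 * (u \<bullet> v)"
    and sigma_pos: "\<sigma>2 > 0"
    and adapted: "adapted_cone M (\<xi> 1) C"
    and gamma_pos: "\<gamma> > 0" and alpha_pos: "\<alpha> > 0"
    and tail: "\<And>n::nat. n \<ge> 1 \<Longrightarrow>
       \<P>(\<omega> in M. exit_time \<xi> C \<omega> > enat n) \<ge> \<gamma> * real n powr (-\<alpha>)"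
    and moment: "integrable M (\<lambda>\<omega>. norm (\<xi> 1 \<omega>) powr (2 * \<alpha> + 2))"
  shows "(\<lambda>n::nat. \<P>(\<omega> in M. Max ((\<lambda>i. norm (\<xi> i \<omega>)) ` {1..n}) > sqrt (real n)
            \<bar> exit_time \<xi> C \<omega> > enat n)) \<longlonglongrightarrow> 0"
proof -
  interpret prob_space M by fact
  note meas[measurable]
  define tail_moment where "tail_moment n =
    (\<integral>\<omega>. indicator {\<omega>\<in>space M. sqrt (real n) < norm (\<xi> 1 \<omega>)} \<omega>
            * norm (\<xi> 1 \<omega>) powr (2 * \<alpha> + 2) \<partial>M)" for n
  have "(\<lambda>n. tail_moment n / \<gamma>) \<longlonglongrightarrow> 0"
    using tail_integral_tendsto_zero[OF _ moment filterlim_compose[OF sqrt_at_top filterlim_real_sequentially]]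
    unfolding tail_moment_def by (auto intro: tendsto_divide_zero)
  moreover have "eventually (\<lambda>n. norm (\<P>(\<omega> in M. Max ((\<lambda>i. norm (\<xi> i \<omega>)) ` {1..n}) > sqrt (real n)
            \<bar> exit_time \<xi> C \<omega> > enat n)) \<le> norm (tail_moment n / \<gamma>)) sequentially"
    using eventually_ge_at_top[of 1]
  proof eventually_elim
    case (elim n)
    let ?q = "measure M {\<omega>\<in>space M. sqrt (real n) < norm (\<xi> 1 \<omega>)}"
    have "\<P>(\<omega> in M. Max ((\<lambda>i. norm (\<xi> i \<omega>)) ` {1..n}) > sqrt (real n) \<and> exit_time \<xi> C \<omega> > enat n)
            \<le> \<P>(\<omega> in M. Max ((\<lambda>i. norm (\<xi> i \<omega>)) ` {1..n}) > sqrt (real n))"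
      by (intro finite_measure_mono) auto
    also have "\<dots> \<le> real n * ?q"
      by (rule max_norm_exceeds_le[where \<xi>=\<xi>, OF meas ident elim])
    finally have "cond_prob M (\<lambda>\<omega>. Max ((\<lambda>i. norm (\<xi> i \<omega>)) ` {1..n}) > sqrt (real n))
                    (\<lambda>\<omega>. exit_time \<xi> C \<omega> > enat n) \<le> real n powr (\<alpha> + 1) * ?q / \<gamma>"
      unfolding cond_prob_def
      using tail[OF elim] gamma_pos elim by (intro ratio_le_under_polynomial_lower_bound) auto
    also have "\<dots> \<le> tail_moment n / \<gamma>"
      using tail_measure_le_tail_moment[OF _ moment, of "sqrt (real n)"] alpha_pos gamma_pos
      unfolding tail_moment_def sqrt_powr_moment_order by (intro divide_right_mono) auto
    also have "\<dots> \<le> \<bar>tail_moment n\<bar> / \<gamma>"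
      using gamma_pos by (intro divide_right_mono) auto
    finally show ?case using gamma_pos by (simp add: cond_prob_def)
  qed
  ultimately show ?thesis by (rule Lim_transform_bound[rotated])
qed

end
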